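(* Let $Q$ be a rational function with distinct poles $z_1,\dotsc,z_d$ ($d\ge1$) of orders $r_1,\dotsc,r_d$. Put $P=\prod_{i=1}^d(z-z_i)^{r_i}$ and $P_0=\prod_{i=1}^d(z-z_i)$, and for each $n\ge1$ write $Q^{(n)}=\frac{\alpha_nR_n}{PP_0^n}$ with $\alpha_n\in\mathbb{C}$ and $R_n\in\mathbb{C}[z]$ monic. Then $\lim_{n\to\infty}\frac{\deg R_n}{n}=d-1$. *)

theory Defs
  imports "HOL-Analysis.Analysis" "HOL-Computational_Algebra.Polynomial"
begin

definition pole_poly :: "nat \<Rightarrow> (nat \<Rightarrow> complex) \<Rightarrow> (nat \<Rightarrow> nat) \<Rightarrow> complex poly" where
  "pole_poly d zs r = (\<Prod>i<d. [:- zs i, 1:] ^ r i)"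

definition pole_poly0 :: "nat \<Rightarrow> (nat \<Rightarrow> complex) \<Rightarrow> complex poly" where
  "pole_poly0 d zs = (\<Prod>i<d. [:- zs i, 1:])"

end

theory Submission
  imports Defs
begin

text \<open>
  Let P' P0 = P L. Then L has degree d - 1 and leading coefficient p = deg P, and
  differentiating N/(P P0^n) shows Q^(n) = N_n/(P P0^n), where N_0 = A and
  N_(n+1) = N_n' P0 - N_n (L + n P0'). This recursion is linear in A and sends q P to
  q^(n) P P0^n, which vanishes for n > deg q; so for large n only B = A mod P \<noteq> 0 matters.
  For B each step raises the degree by exactly d - 1: the top coefficient gets multiplied
  by deg N_n - (p + n d), which is nonzero because deg N_n = deg B + n (d - 1) < p + n d.
\<close>

lemma higher_pderiv_eq_0:
  fixes p :: "'a::{comm_semiring_1, semiring_no_zero_divisors} poly"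
  assumes "degree p < n"
  shows "(pderiv ^^ n) p = 0"
  using assms by (intro poly_eqI) (simp add: coeff_higher_pderiv coeff_eq_0)

lemma poly_eqI_cofinite:
  fixes p q :: "'a::{idom, ring_char_0} poly"
  assumes "finite S" "\<And>x. x \<notin> S \<Longrightarrow> poly p x = poly q x"
  shows "p = q"
proof (rule ccontr)
  assume "p \<noteq> q"
  then have "finite {x. poly (p - q) x = 0}"
    by (intro poly_roots_finite) simp
  moreover have "UNIV \<subseteq> S \<union> {x. poly (p - q) x = 0}"
    using assms(2) by auto
  ultimately have "finite (UNIV :: 'a set)"
    using assms(1) by (meson finite_Un finite_subset)
  then show False
    using infinite_UNIV_char_0 by blast
qed

lemma coeff_mult_degree_le_sum:
  fixes p q :: "'a::idom poly"
  assumes "degree p \<le> m" "degree q \<le> n"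
  shows "coeff (p * q) (m + n) = coeff p m * coeff q n"
proof (cases "degree p = m \<and> degree q = n")
  case True
  then show ?thesis
    using coeff_mult_degree_sum[of p q] by simp
next
  case False
  then have "degree p + degree q < m + n"
    using assms by linarith
  then have "coeff (p * q) (m + n) = 0"
    using degree_mult_le[of p q] by (intro coeff_eq_0) linarith
  moreover have "coeff p m * coeff q n = 0"
    using False assms by (auto simp: coeff_eq_0)
  ultimately show ?thesis
    by simp
qed

lemma lead_coeff_degree_logderiv_numer:
  fixes P P0 L :: "'a::{idom, ring_char_0} poly"
  assumes PL: "pderiv P * P0 = P * L" and "degree P \<ge> 1" "P0 \<noteq> 0"
  shows "degree L = degree P0 - 1 \<and> lead_coeff L = of_nat (degree P) * lead_coeff P0"
proof -
  have "P \<noteq> 0" "pderiv P \<noteq> 0"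
    using \<open>degree P \<ge> 1\<close> by (auto simp: pderiv_eq_0_iff)
  then have "L \<noteq> 0"
    using PL \<open>P0 \<noteq> 0\<close> by auto
  have "degree (pderiv P) + degree P0 = degree P + degree L"
    using arg_cong[OF PL, of degree] \<open>P \<noteq> 0\<close> \<open>pderiv P \<noteq> 0\<close> \<open>L \<noteq> 0\<close> \<open>P0 \<noteq> 0\<close>
    by (simp add: degree_mult_eq)
  moreover have "lead_coeff (pderiv P) * lead_coeff P0 = lead_coeff P * lead_coeff L"
    using arg_cong[OF PL, of lead_coeff] by (simp add: lead_coeff_mult)
  ultimately show ?thesis
    using \<open>degree P \<ge> 1\<close> \<open>P \<noteq> 0\<close> by (simp add: degree_pderiv coeff_pderiv)
qed

fun deriv_numer :: "'a::idom poly \<Rightarrow> 'a poly \<Rightarrow> 'a poly \<Rightarrow> nat \<Rightarrow> 'a poly" where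
  "deriv_numer P0 L A 0 = A"
| "deriv_numer P0 L A (Suc n) =
     pderiv (deriv_numer P0 L A n) * P0 - deriv_numer P0 L A n * (L + smult (of_nat n) (pderiv P0))"

lemma deriv_numer_add:
  "deriv_numer P0 L (A + B) n = deriv_numer P0 L A n + deriv_numer P0 L B n"
  by (induction n) (simp_all add: pderiv_add algebra_simps)

lemma deriv_numer_mult:
  assumes PL: "pderiv P * P0 = P * L"
  shows "deriv_numer P0 L (q * P) n = (pderiv ^^ n) q * P * P0 ^ n"
proof (induction n)
  case 0
  then show ?case by simp
next
  case (Suc n)
  define q' where "q' = (pderiv ^^ n) q"
  have P0_pow: "smult (of_nat n) (P0 ^ (n - 1) * pderiv P0) * P0 = smult (of_nat n) (P0 ^ n * pderiv P0)"
    by (cases n) (simp_all add: algebra_simps)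
  have "deriv_numer P0 L (q * P) (Suc n)
      = pderiv (q' * P * P0 ^ n) * P0 - q' * P * P0 ^ n * (L + smult (of_nat n) (pderiv P0))"
    using Suc by (simp add: q'_def)
  also have "\<dots> = pderiv q' * P * P0 ^ Suc n + q' * P0 ^ n * (pderiv P * P0)
      + q' * P * (smult (of_nat n) (P0 ^ (n - 1) * pderiv P0) * P0)
      - q' * P * P0 ^ n * (L + smult (of_nat n) (pderiv P0))"
    by (simp add: pderiv_mult pderiv_power algebra_simps)
  also have "\<dots> = pderiv q' * P * P0 ^ Suc n"
    unfolding P0_pow PL by (simp add: algebra_simps)
  finally show ?case
    by (simp add: q'_def)
qed

lemma deriv_numer_eq_mod:
  fixes A P :: "'a::field poly"
  assumes "pderiv P * P0 = P * L" "degree (A div P) < n"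
  shows "deriv_numer P0 L A n = deriv_numer P0 L (A mod P) n"
proof -
  have "deriv_numer P0 L A n = deriv_numer P0 L ((A div P) * P) n + deriv_numer P0 L (A mod P) n"
    by (subst div_mult_mod_eq[symmetric, of A P]) (rule deriv_numer_add)
  then show ?thesis
    using assms by (simp add: deriv_numer_mult higher_pderiv_eq_0)
qed

lemma degree_pderiv_mult_diff_mult:
  fixes N P0 K :: "'a::{idom, ring_char_0} poly"
  assumes "N \<noteq> 0" "degree P0 = d" "d \<ge> 1" "lead_coeff P0 = 1"
    and "degree K \<le> d - 1" "coeff K (d - 1) = of_nat m" "m \<noteq> degree N"
  shows "pderiv N * P0 - N * K \<noteq> 0 \<and> degree (pderiv N * P0 - N * K) = degree N + (d - 1)"
proof -
  define e where "e = degree N"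
  have pderiv_part: "degree (pderiv N * P0) \<le> e + (d - 1) \<and>
      coeff (pderiv N * P0) (e + (d - 1)) = of_nat e * lead_coeff N"
  proof (cases e)
    case 0
    then have "pderiv N = 0"
      by (simp add: e_def pderiv_eq_0_iff)
    then show ?thesis
      by (simp add: 0)
  next
    case (Suc k)
    have "degree (pderiv N) = k"
      using Suc by (simp add: degree_pderiv flip: e_def)
    moreover have "e + (d - 1) = k + d"
      using Suc assms(3) by simp
    ultimately show ?thesis
      using coeff_mult_degree_le_sum[of "pderiv N" k P0 d] degree_mult_le[of "pderiv N" P0] assms(2,4)
      by (simp add: coeff_pderiv Suc[symmetric] e_def)
  qed
  have mult_part: "degree (N * K) \<le> e + (d - 1) \<and> coeff (N * K) (e + (d - 1)) = lead_coeff N * of_nat m"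
    using coeff_mult_degree_le_sum[of N e K "d - 1"] degree_mult_le[of N K] assms(5,6)
    by (simp add: e_def)
  have "coeff (pderiv N * P0 - N * K) (e + (d - 1)) = lead_coeff N * (of_nat e - of_nat m)"
    using pderiv_part mult_part by (simp add: algebra_simps)
  then have top: "coeff (pderiv N * P0 - N * K) (e + (d - 1)) \<noteq> 0"
    using assms(1,7) by (simp add: e_def)
  then have "e + (d - 1) \<le> degree (pderiv N * P0 - N * K)"
    by (rule le_degree)
  moreover have "degree (pderiv N * P0 - N * K) \<le> e + (d - 1)"
    using pderiv_part mult_part degree_diff_le by blast
  ultimately show ?thesis
    using top by (auto simp: e_def)
qed

lemma degree_deriv_numer:
  fixes P0 L B :: "'a::{idom, ring_char_0} poly"
  assumes "degree P0 = d" "d \<ge> 1" "lead_coeff P0 = 1"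
    and "degree L = d - 1" "lead_coeff L = of_nat p" "B \<noteq> 0" "degree B < p"
  shows "deriv_numer P0 L B n \<noteq> 0 \<and> degree (deriv_numer P0 L B n) = degree B + n * (d - 1)"
proof (induction n)
  case 0
  then show ?case
    using assms by simp
next
  case (Suc n)
  define K where "K = L + smult (of_nat n) (pderiv P0)"
  have "degree K \<le> d - 1"
    unfolding K_def using assms(1,4) by (intro degree_add_le) (auto simp: degree_pderiv)
  moreover have "coeff K (d - 1) = of_nat (p + n * d)"
    unfolding K_def using assms(1-5) by (simp add: coeff_pderiv)
  moreover have "p + n * d \<noteq> degree (deriv_numer P0 L B n)"
    using Suc assms(2,7) by (simp add: algebra_simps)
  ultimately have "deriv_numer P0 L B (Suc n) \<noteq> 0 \<and>
      degree (deriv_numer P0 L B (Suc n)) = degree (deriv_numer P0 L B n) + (d - 1)"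
    unfolding deriv_numer.simps K_def[symmetric]
    by (rule degree_pderiv_mult_diff_mult[OF conjunct1[OF Suc] assms(1-3)])
  then show ?case
    using Suc by simp
qed

lemma degree_deriv_numer_not_dvd:
  fixes P P0 L A :: "'a::field_char_0 poly"
  assumes PL: "pderiv P * P0 = P * L" and "degree P \<ge> 1"
    and "degree P0 = d" "d \<ge> 1" "lead_coeff P0 = 1"
    and "\<not> P dvd A" "degree (A div P) < n"
  shows "deriv_numer P0 L A n \<noteq> 0 \<and> degree (deriv_numer P0 L A n) = degree (A mod P) + n * (d - 1)"
proof -
  have "P0 \<noteq> 0"
    using assms(3,4) by auto
  then have "degree L = d - 1" "lead_coeff L = of_nat (degree P)"
    using lead_coeff_degree_logderiv_numer[OF PL \<open>degree P \<ge> 1\<close>] assms(3,5) by auto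
  moreover have "A mod P \<noteq> 0"
    using \<open>\<not> P dvd A\<close> by (simp add: mod_eq_0_iff_dvd)
  moreover have "degree (A mod P) < degree P"
    using \<open>degree P \<ge> 1\<close> \<open>\<not> P dvd A\<close> by (intro degree_mod_less_degree) auto
  ultimately show ?thesis
    using degree_deriv_numer[OF assms(3-5)] deriv_numer_eq_mod[OF PL \<open>degree (A div P) < n\<close>]
    by simp
qed

lemma has_field_derivative_deriv_numer_quotient:
  fixes P P0 L N :: "'a::real_normed_field poly"
  assumes PL: "pderiv P * P0 = P * L" and w: "poly P w \<noteq> 0" "poly P0 w \<noteq> 0"
  shows "((\<lambda>x. poly N x / (poly P x * poly P0 x ^ n)) has_field_derivative
           poly (pderiv N * P0 - N * (L + smult (of_nat n) (pderiv P0))) w / (poly P w * poly P0 w ^ Suc n)) (at w)"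
proof (rule DERIV_cong)
  have PL_w: "poly (pderiv P) w = poly P w * poly L w / poly P0 w"
    using arg_cong[OF PL, of "\<lambda>p. poly p w"] w by (simp add: field_simps)
  show "((\<lambda>x. poly N x / (poly P x * poly P0 x ^ n)) has_field_derivative
      (poly (pderiv N) w * (poly P w * poly P0 w ^ n)
       - poly N w * (poly (pderiv P) w * poly P0 w ^ n
                     + poly P w * (of_nat n * poly P0 w ^ (n - 1) * poly (pderiv P0) w)))
      / (poly P w * poly P0 w ^ n * (poly P w * poly P0 w ^ n))) (at w)"
    using w by (auto intro!: derivative_eq_intros simp: algebra_simps)
  then show "(poly (pderiv N) w * (poly P w * poly P0 w ^ n)
       - poly N w * (poly (pderiv P) w * poly P0 w ^ n
                     + poly P w * (of_nat n * poly P0 w ^ (n - 1) * poly (pderiv P0) w)))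
      / (poly P w * poly P0 w ^ n * (poly P w * poly P0 w ^ n))
    = poly (pderiv N * P0 - N * (L + smult (of_nat n) (pderiv P0))) w / (poly P w * poly P0 w ^ Suc n)"
    using w unfolding PL_w by (cases n) (simp_all add: field_simps)
qed

lemma higher_deriv_poly_quotient:
  fixes P P0 L A :: "'a::real_normed_field poly"
  assumes PL: "pderiv P * P0 = P * L" and "poly P w \<noteq> 0" "poly P0 w \<noteq> 0"
  shows "(deriv ^^ n) (\<lambda>x. poly A x / poly P x) w = poly (deriv_numer P0 L A n) w / (poly P w * poly P0 w ^ n)"
  using assms(2,3)
proof (induction n arbitrary: w)
  case 0
  then show ?case by simp
next
  case (Suc n)
  define S where "S = {x. poly P x \<noteq> 0 \<and> poly P0 x \<noteq> 0}"
  have "open S"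
    unfolding S_def by (intro open_Collect_conj open_Collect_neq) (auto intro: continuous_intros)
  then have "\<forall>\<^sub>F x in nhds w. (deriv ^^ n) (\<lambda>x. poly A x / poly P x) x
      = poly (deriv_numer P0 L A n) x / (poly P x * poly P0 x ^ n)"
    using eventually_nhds_in_open[of S w] Suc by (auto simp: S_def elim!: eventually_mono)
  then have "(deriv ^^ Suc n) (\<lambda>x. poly A x / poly P x) w
      = deriv (\<lambda>x. poly (deriv_numer P0 L A n) x / (poly P x * poly P0 x ^ n)) w"
    by (simp add: deriv_cong_ev)
  then show ?case
    using has_field_derivative_deriv_numer_quotient[OF PL Suc.prems] by (simp add: DERIV_imp_deriv)
qed

lemma tendsto_ratio_eventually_affine:
  fixes f :: "nat \<Rightarrow> nat"
  assumes "\<forall>\<^sub>F n in sequentially. f n = c + n * k"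
  shows "(\<lambda>n. real (f n) / real n) \<longlonglongrightarrow> real k"
proof -
  have "(\<lambda>n. real c / real n + real k) \<longlonglongrightarrow> 0 + real k"
    by (intro tendsto_add lim_const_over_n tendsto_const)
  moreover have "\<forall>\<^sub>F n in sequentially. real c / real n + real k = real (f n) / real n"
    using assms eventually_gt_at_top[of 0] by eventually_elim (simp add: field_simps)
  ultimately show ?thesis
    by (simp add: Lim_transform_eventually)
qed

text \<open>L = \<Sum>i. r i * \<Prod>j\<noteq>i. (z - zs j), so that P'/P = L/P0.\<close>

fun pole_logderiv_numer :: "nat \<Rightarrow> (nat \<Rightarrow> complex) \<Rightarrow> (nat \<Rightarrow> nat) \<Rightarrow> complex poly" where
  "pole_logderiv_numer 0 zs r = 0"
| "pole_logderiv_numer (Suc d) zs r =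
     pole_logderiv_numer d zs r * [:- zs d, 1:] + of_nat (r d) * pole_poly0 d zs"

lemma pderiv_pole_poly:
  "pderiv (pole_poly d zs r) * pole_poly0 d zs = pole_poly d zs r * pole_logderiv_numer d zs r"
proof (induction d)
  case 0
  then show ?case by (simp add: pole_poly_def pole_poly0_def)
next
  case (Suc d)
  define X where "X = [:- zs d, 1:]"
  have P: "pole_poly (Suc d) zs r = pole_poly d zs r * X ^ r d"
    by (simp add: pole_poly_def X_def)
  have P0: "pole_poly0 (Suc d) zs = pole_poly0 d zs * X"
    by (simp add: pole_poly0_def X_def)
  have X_pow: "smult (of_nat (r d)) (X ^ (r d - 1)) * X = of_nat (r d) * X ^ r d"
    by (cases "r d") (simp_all add: of_nat_poly algebra_simps)
  have "pderiv (pole_poly (Suc d) zs r) * pole_poly0 (Suc d) zs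
      = (pderiv (pole_poly d zs r) * pole_poly0 d zs) * X ^ r d * X
        + pole_poly d zs r * pole_poly0 d zs * (smult (of_nat (r d)) (X ^ (r d - 1)) * X)"
    unfolding P P0 by (simp add: pderiv_mult pderiv_power X_def pderiv_pCons algebra_simps)
  also have "\<dots> = pole_poly (Suc d) zs r * pole_logderiv_numer (Suc d) zs r"
    unfolding Suc X_pow P by (simp add: X_def algebra_simps)
  finally show ?case .
qed

lemma degree_pole_poly0: "degree (pole_poly0 d zs) = d"
  by (simp add: pole_poly0_def degree_prod_sum_eq)

lemma lead_coeff_pole_poly0: "lead_coeff (pole_poly0 d zs) = 1"
  by (simp add: pole_poly0_def lead_coeff_prod)

lemma degree_pole_poly: "degree (pole_poly d zs r) = (\<Sum>i<d. r i)"
  by (simp add: pole_poly_def degree_prod_sum_eq degree_power_eq)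

lemma poly_pole_poly: "poly (pole_poly d zs r) w = (\<Prod>i<d. (w - zs i) ^ r i)"
  by (simp add: pole_poly_def poly_prod)

lemma poly_pole_poly0: "poly (pole_poly0 d zs) w = (\<Prod>i<d. w - zs i)"
  by (simp add: pole_poly0_def poly_prod)

lemma pole_poly_not_dvd:
  assumes "i < d" "r i \<ge> 1" "poly A (zs i) \<noteq> 0"
  shows "\<not> pole_poly d zs r dvd A"
proof
  assume "pole_poly d zs r dvd A"
  moreover have "poly (pole_poly d zs r) (zs i) = 0"
    using assms(1,2) by (auto simp: poly_pole_poly)
  ultimately show False
    using assms(3) by (auto elim: dvdE)
qed

lemma deriv_numer_pole_poly_eq:
  assumes "\<And>w. w \<notin> zs ` {..<d} \<Longrightarrow> (deriv ^^ n) (\<lambda>x. poly A x / poly (pole_poly d zs r) x) w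
             = c * poly R w / (poly (pole_poly d zs r) w * poly (pole_poly0 d zs) w ^ n)"
  shows "smult c R = deriv_numer (pole_poly0 d zs) (pole_logderiv_numer d zs r) A n"
proof (rule poly_eqI_cofinite[of "zs ` {..<d}"])
  fix w assume w: "w \<notin> zs ` {..<d}"
  then have "poly (pole_poly d zs r) w \<noteq> 0" "poly (pole_poly0 d zs) w \<noteq> 0"
    by (auto simp: poly_pole_poly poly_pole_poly0)
  then show "poly (smult c R) w = poly (deriv_numer (pole_poly0 d zs) (pole_logderiv_numer d zs r) A n) w"
    using assms[OF w] higher_deriv_poly_quotient[OF pderiv_pole_poly, where w = w and n = n and A = A] by simp
qed simp

theorem lemma4p2:
  fixes d :: nat and zs :: "nat \<Rightarrow> complex" and r :: "nat \<Rightarrow> nat"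
    and A :: "complex poly" and Q :: "complex \<Rightarrow> complex"
    and \<alpha> :: "nat \<Rightarrow> complex" and R :: "nat \<Rightarrow> complex poly"
  assumes "d \<ge> 1"
    and "inj_on zs {..<d}"
    and "\<And>i. i < d \<Longrightarrow> r i \<ge> 1"
    and "\<And>i. i < d \<Longrightarrow> poly A (zs i) \<noteq> 0"
    and "Q = (\<lambda>w. poly A w / poly (pole_poly d zs r) w)"
    and "\<And>n. n \<ge> 1 \<Longrightarrow> lead_coeff (R n) = 1"
    and "\<And>n w. n \<ge> 1 \<Longrightarrow> w \<notin> zs ` {..<d} \<Longrightarrow>
           (deriv ^^ n) Q w = \<alpha> n * poly (R n) w / (poly (pole_poly d zs r) w * poly (pole_poly0 d zs) w ^ n)"
  shows "(\<lambda>n. real (degree (R n)) / real n) \<longlonglongrightarrow> real d - 1"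
proof -
  define P P0 L where "P = pole_poly d zs r" and "P0 = pole_poly0 d zs" and "L = pole_logderiv_numer d zs r"
  have PL: "pderiv P * P0 = P * L"
    by (simp add: P_def P0_def L_def pderiv_pole_poly)
  have P0: "degree P0 = d" "lead_coeff P0 = 1"
    unfolding P0_def by (rule degree_pole_poly0 lead_coeff_pole_poly0)+
  have "degree P \<ge> 1"
    using assms(1) assms(3)[of 0] member_le_sum[of 0 "{..<d}" r] by (simp add: P_def degree_pole_poly)
  have not_dvd: "\<not> P dvd A"
    unfolding P_def using assms(1,3,4) by (intro pole_poly_not_dvd) auto
  have R_eq: "smult (\<alpha> n) (R n) = deriv_numer P0 L A n" if "n \<ge> 1" for n
    unfolding P0_def L_def using assms(7)[OF that] by (intro deriv_numer_pole_poly_eq) (simp add: assms(5))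
  have "\<forall>\<^sub>F n in sequentially. degree (R n) = degree (A mod P) + n * (d - 1)"
    using eventually_gt_at_top[of "degree (A div P)"]
  proof eventually_elim
    case (elim n)
    then have "deriv_numer P0 L A n \<noteq> 0 \<and> degree (deriv_numer P0 L A n) = degree (A mod P) + n * (d - 1)"
      by (intro degree_deriv_numer_not_dvd[OF PL \<open>degree P \<ge> 1\<close> P0(1) assms(1) P0(2) not_dvd])
    moreover have "smult (\<alpha> n) (R n) = deriv_numer P0 L A n"
      using elim by (intro R_eq) simp
    ultimately show ?case
      by (metis degree_smult_eq smult_eq_0_iff)
  qed
  then have "(\<lambda>n. real (degree (R n)) / real n) \<longlonglongrightarrow> real (d - 1)"
    by (rule tendsto_ratio_eventually_affine)
  then show ?thesis
    using assms(1) by (simp add: of_nat_diff)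
qed

end
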